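(* Let $G$ be a NOI-graph or a COI-graph on $n$ vertices. Then to each connected component $C_k$ of $G$ (isolated vertices included) corresponds a vector $\mathbf{v}_k\in\{-1,0,1\}^n$, supported on the vertex set of $C_k$, such that the vectors $\{\mathbf{v}_k\}$ form a basis of the kernel of the hybrid Laplacian $\mathcal{L}(G)$.
   Context: A hybrid graph $G=(V,E_L+E_Q)$ has a set $E_L$ of $L$-edges and a set $E_Q$ of $Q$-edges. Its hybrid Laplacian is $\mathcal{L}(G)=L(S_l)+Q(S_q)$ with $S_l=(V,E_L)$, $S_q=(V,E_Q)$, $L=D-A$ the signed Laplacian and $Q=D+A$ the signless Laplacian. Connected components are taken in the graph with all edges of both types. $G$ is a NOI-graph if $S_q$ is bipartite and no vertex is incident to both a $Q$-edge and an $L$-edge. $G$ is a COI-graph if $S_q$ is bipartite with a bipartition $(P_1,P_2)$ of $V$ (every $Q$-edge joining $P_1$ to $P_2$) such that every $L$-edge joins two vertices in the same part. *)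

theory Defs
  imports "HOL-Analysis.Analysis"
begin

text \<open>Vertices are the elements of a finite type 'n, so n = CARD('n).
  Edges are unordered pairs, i.e. 2-element vertex sets.
  El is the set of L-edges, Eq the set of Q-edges.\<close>

definition hybrid_graph :: "'n set set \<Rightarrow> 'n set set \<Rightarrow> bool" where
  "hybrid_graph El Eq \<longleftrightarrow> (\<forall>e \<in> El \<union> Eq. card e = 2)"

definition degree :: "'n set set \<Rightarrow> 'n \<Rightarrow> real" where
  "degree E i = real (card {e \<in> E. i \<in> e})"

definition adj_mat :: "'n set set \<Rightarrow> real^'n^'n" where
  "adj_mat E = (\<chi> i j. if {i, j} \<in> E then 1 else 0)"

definition deg_mat :: "'n set set \<Rightarrow> real^'n^'n" where
  "deg_mat E = (\<chi> i j. if i = j then degree E i else 0)"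

definition lap :: "('n::finite) set set \<Rightarrow> real^'n^'n" where
  "lap E = deg_mat E - adj_mat E"

definition signless_lap :: "('n::finite) set set \<Rightarrow> real^'n^'n" where
  "signless_lap E = deg_mat E + adj_mat E"

definition hybrid_laplacian :: "('n::finite) set set \<Rightarrow> 'n set set \<Rightarrow> real^'n^'n" where
  "hybrid_laplacian El Eq = lap El + signless_lap Eq"

definition bipartition :: "'n set set \<Rightarrow> 'n set \<Rightarrow> bool" where
  "bipartition E P1 \<longleftrightarrow> (\<forall>e \<in> E. \<exists>x y. e = {x, y} \<and> x \<in> P1 \<and> y \<notin> P1)"

definition bipartite :: "'n set set \<Rightarrow> bool" where
  "bipartite E \<longleftrightarrow> (\<exists>P1. bipartition E P1)"

definition NOI_graph :: "'n set set \<Rightarrow> 'n set set \<Rightarrow> bool" where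
  "NOI_graph El Eq \<longleftrightarrow> bipartite Eq \<and>
     \<not> (\<exists>v eq el. eq \<in> Eq \<and> el \<in> El \<and> v \<in> eq \<and> v \<in> el)"

text \<open>P1 and P2 = - P1 form a bipartition of V.\<close>
definition COI_graph :: "'n set set \<Rightarrow> 'n set set \<Rightarrow> bool" where
  "COI_graph El Eq \<longleftrightarrow> (\<exists>P1. bipartition Eq P1 \<and>
     (\<forall>e \<in> El. e \<subseteq> P1 \<or> e \<subseteq> - P1))"

definition connected_rel :: "'n set set \<Rightarrow> 'n set set \<Rightarrow> ('n \<times> 'n) set" where
  "connected_rel El Eq = {(x, y). \<exists>e \<in> El \<union> Eq. x \<in> e \<and> y \<in> e}\<^sup>*"

definition components :: "'n set set \<Rightarrow> 'n set set \<Rightarrow> 'n set set" where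
  "components El Eq = UNIV // connected_rel El Eq"

definition null_space :: "real^'n^'m \<Rightarrow> (real^'n) set" where
  "null_space A = {x. A *v x = 0}"

end

theory Submission
  imports Defs
begin

(* Every NOI-graph is a COI-graph: adding the vertices met by L-edges to one side of a
   bipartition of S_q keeps it a bipartition and puts every L-edge inside that side.
   Given a COI-bipartition (P, -P), let \<sigma> be 1 on P and -1 off P. L-edges join vertices of
   equal sign and Q-edges vertices of opposite sign, so
     (\<L>(G) x)_i = \<sigma>_i \<Sum>_{j adjacent to i} (\<sigma>_i x_i - \<sigma>_j x_j):
   switching signs by \<sigma> turns \<L>(G) into the ordinary Laplacian of the underlying graph.
   The kernel of that Laplacian consists of the vectors constant on components, since
   \<Sum>_i y_i (L y)_i = \<Sum>_{ij edge} (y_i - y_j)^2. Hence the kernel of \<L>(G) is spanned by the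
   vectors \<sigma> 1_C, one per component C, which are pairwise orthogonal. *)

definition signed_indicator :: "('n::finite \<Rightarrow> real) \<Rightarrow> 'n set \<Rightarrow> real^'n" where
  "signed_indicator s C = (\<chi> j. if j \<in> C then s j else 0)"

lemma signed_indicator_nth_nonzero:
  assumes "i \<in> C" "s i \<noteq> 0"
  shows "signed_indicator s C $ i \<noteq> 0"
  using assms by (simp add: signed_indicator_def)

lemma inj_on_signed_indicator:
  assumes "disjoint \<C>" "{} \<notin> \<C>" "\<And>j. s j \<noteq> 0"
  shows "inj_on (signed_indicator s) \<C>"
proof (rule inj_onI)
  fix C D assume C: "C \<in> \<C>" and D: "D \<in> \<C>"
    and eq: "signed_indicator s C = signed_indicator s D"
  obtain i where i: "i \<in> C" using C assms(2) by (metis ex_in_conv)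
  then have "signed_indicator s D $ i \<noteq> 0"
    using eq signed_indicator_nth_nonzero assms(3) by metis
  then have "i \<in> D" by (simp add: signed_indicator_def split: if_split_asm)
  with i C D assms(1) show "C = D" by (auto simp: pairwise_def disjnt_def)
qed

lemma independent_signed_indicator:
  assumes "disjoint \<C>" "{} \<notin> \<C>" "\<And>j. s j \<noteq> 0"
  shows "independent (signed_indicator s ` \<C>)"
proof (rule pairwise_orthogonal_independent)
  show "pairwise orthogonal (signed_indicator s ` \<C>)"
  proof (rule pairwise_imageI)
    fix C D assume "C \<in> \<C>" "D \<in> \<C>" "C \<noteq> D"
    then have "C \<inter> D = {}" using assms(1) by (auto simp: pairwise_def disjnt_def)
    then show "orthogonal (signed_indicator s C) (signed_indicator s D)"
      by (auto simp: orthogonal_def inner_vec_def signed_indicator_def intro!: sum.neutral)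
  qed
  have "signed_indicator s C \<noteq> 0" if C: "C \<in> \<C>" for C
  proof -
    obtain i where "i \<in> C" using C assms(2) by (metis ex_in_conv)
    then show ?thesis using signed_indicator_nth_nonzero[of i C s] assms(3) by auto
  qed
  then show "0 \<notin> signed_indicator s ` \<C>" by (auto simp: image_iff)
qed

lemma in_span_signed_indicator:
  assumes \<C>: "partition_on UNIV \<C>"
    and const: "\<And>C i j. C \<in> \<C> \<Longrightarrow> i \<in> C \<Longrightarrow> j \<in> C \<Longrightarrow> y i = y j"
  shows "(\<chi> j. s j * y j) \<in> span (signed_indicator s ` \<C>)"
proof -
  define c where "c C = y (SOME j. j \<in> C)" for C
  have "(\<chi> j. s j * y j) = (\<Sum>C\<in>\<C>. c C *\<^sub>R signed_indicator s C)"
  proof (subst vec_eq_iff, intro allI)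
    fix i
    obtain C where C: "C \<in> \<C>" "i \<in> C" using partition_onD1[OF \<C>] by blast
    have "{D \<in> \<C>. i \<in> D} = {C}"
      using C partition_onD2[OF \<C>] by (auto simp: pairwise_def disjnt_def)
    have "(\<Sum>D\<in>\<C>. c D *\<^sub>R signed_indicator s D) $ i = (\<Sum>D\<in>\<C>. if i \<in> D then c D * s i else 0)"
      by (auto simp: sum_component signed_indicator_def intro!: sum.cong)
    also have "\<dots> = (\<Sum>D\<in>{D \<in> \<C>. i \<in> D}. c D * s i)"
      by (simp add: sum.inter_filter)
    also have "\<dots> = c C * s i"
      using \<open>{D \<in> \<C>. i \<in> D} = {C}\<close> by simp
    also have "c C = y i"
      unfolding c_def using C by (metis const someI)
    finally show "(\<chi> j. s j * y j) $ i = (\<Sum>D\<in>\<C>. c D *\<^sub>R signed_indicator s D) $ i"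
      by simp
  qed
  also have "\<dots> \<in> span (signed_indicator s ` \<C>)"
    by (intro span_sum span_scale span_base) auto
  finally show ?thesis .
qed

lemma degree_eq_sum:
  fixes E :: "('n::finite) set set"
  assumes "\<forall>e\<in>E. card e = 2"
  shows "degree E i = (\<Sum>j\<in>UNIV. if {i, j} \<in> E then 1 else 0)"
proof -
  have "{e \<in> E. i \<in> e} = (\<lambda>j. {i, j}) ` {j. {i, j} \<in> E}"
  proof (intro equalityI subsetI)
    fix e assume e: "e \<in> {e \<in> E. i \<in> e}"
    then obtain a b where "e = {a, b}" using assms card_2_iff by (metis mem_Collect_eq)
    with e have "e = {i, b} \<or> e = {i, a}" by (auto simp: insert_commute)
    with e show "e \<in> (\<lambda>j. {i, j}) ` {j. {i, j} \<in> E}" by auto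
  qed auto
  moreover have "inj_on (\<lambda>j. {i, j}) {j. {i, j} \<in> E}"
    by (auto simp: inj_on_def doubleton_eq_iff)
  ultimately have "card {e \<in> E. i \<in> e} = card {j. {i, j} \<in> E}"
    by (simp add: card_image)
  then show ?thesis
    by (simp add: degree_def sum.If_cases Int_def)
qed

lemma hybrid_laplacian_mult_vec_nth:
  fixes El Eq :: "('n::finite) set set"
  assumes "hybrid_graph El Eq"
  shows "(hybrid_laplacian El Eq *v x) $ i =
    (\<Sum>j\<in>UNIV. (if {i, j} \<in> El then x$i - x$j else 0) + (if {i, j} \<in> Eq then x$i + x$j else 0))"
proof -
  define l where "l j = (if {i, j} \<in> El then 1 else 0 :: real)" for j
  define q where "q j = (if {i, j} \<in> Eq then 1 else 0 :: real)" for j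
  have "degree El i = sum l UNIV" "degree Eq i = sum q UNIV"
    using assms unfolding hybrid_graph_def l_def q_def by (simp_all add: degree_eq_sum)
  then have deg: "degree El i + degree Eq i = (\<Sum>j\<in>UNIV. l j + q j)"
    by (simp add: sum.distrib)
  have "(hybrid_laplacian El Eq *v x) $ i
      = (\<Sum>j\<in>UNIV. (if i = j then (degree El i + degree Eq i) * x$i else 0) + (q j - l j) * x$j)"
    unfolding matrix_vector_mult_def vec_lambda_beta
    by (rule sum.cong) (auto simp: hybrid_laplacian_def lap_def signless_lap_def deg_mat_def
        adj_mat_def l_def q_def algebra_simps)
  also have "\<dots> = (degree El i + degree Eq i) * x$i + (\<Sum>j\<in>UNIV. (q j - l j) * x$j)"
    by (simp add: sum.distrib)
  also have "\<dots> = (\<Sum>j\<in>UNIV. (l j + q j) * x$i + (q j - l j) * x$j)"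
    unfolding deg sum_distrib_right by (simp only: sum.distrib)
  also have "\<dots> = (\<Sum>j\<in>UNIV. (if {i, j} \<in> El then x$i - x$j else 0) + (if {i, j} \<in> Eq then x$i + x$j else 0))"
    by (rule sum.cong) (auto simp: l_def q_def algebra_simps)
  finally show ?thesis .
qed

lemma laplacian_kernel_const_on_edges:
  fixes A :: "'n::finite \<Rightarrow> 'n \<Rightarrow> bool" and y :: "'n \<Rightarrow> real"
  assumes sym: "\<And>i j. A i j = A j i"
    and harmonic: "\<And>i. (\<Sum>j\<in>UNIV. if A i j then y i - y j else 0) = 0"
    and "A i j"
  shows "y i = y j"
proof -
  define f where "f i j = (if A i j then y i * (y i - y j) else 0)" for i j
  have f_zero: "(\<Sum>i\<in>UNIV. \<Sum>j\<in>UNIV. f i j) = 0"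
  proof -
    have "(\<Sum>j\<in>UNIV. f i j) = y i * (\<Sum>j\<in>UNIV. if A i j then y i - y j else 0)" for i
      by (simp add: f_def sum_distrib_left if_distrib cong: if_cong)
    then show ?thesis by (simp add: harmonic)
  qed
  have "(if A i j then (y i - y j)\<^sup>2 else 0) = f i j + f j i" for i j
    by (simp add: f_def sym[of j i] power2_eq_square algebra_simps)
  then have "(\<Sum>i\<in>UNIV. \<Sum>j\<in>UNIV. if A i j then (y i - y j)\<^sup>2 else 0)
      = (\<Sum>i\<in>UNIV. \<Sum>j\<in>UNIV. f i j) + (\<Sum>i\<in>UNIV. \<Sum>j\<in>UNIV. f j i)"
    by (simp add: sum.distrib)
  also have "\<dots> = 0"
    using f_zero sum.swap[of f UNIV UNIV] by simp
  finally have "(\<Sum>i\<in>UNIV. \<Sum>j\<in>UNIV. if A i j then (y i - y j)\<^sup>2 else 0) = 0" .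
  then have "(if A i j then (y i - y j)\<^sup>2 else 0) = 0"
    by (simp add: sum_nonneg_eq_0_iff sum_nonneg)
  with \<open>A i j\<close> show ?thesis by simp
qed

lemma equiv_connected_rel: "equiv UNIV (connected_rel El Eq)"
proof -
  have "sym {(x, y). \<exists>e \<in> El \<union> Eq. x \<in> e \<and> y \<in> e}" by (auto simp: sym_def)
  then show ?thesis
    by (simp add: connected_rel_def equiv_def refl_rtrancl sym_rtrancl trans_rtrancl)
qed

lemma partition_on_components: "partition_on UNIV (components El Eq)"
  unfolding components_def by (rule partition_on_quotient[OF equiv_connected_rel])

lemma mem_component_iff:
  assumes "C \<in> components El Eq" "i \<in> C"
  shows "j \<in> C \<longleftrightarrow> (i, j) \<in> connected_rel El Eq"
proof -
  obtain a where "C = connected_rel El Eq `` {a}"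
    using assms(1) unfolding components_def by (rule quotientE)
  with assms(2) show ?thesis
    using equiv_connected_rel[of El Eq] by (auto elim: equivE dest: symD transD)
qed

lemma edge_within_component:
  assumes "C \<in> components El Eq" "e \<in> El \<union> Eq" "i \<in> e" "j \<in> e" "i \<in> C"
  shows "j \<in> C"
proof -
  have "(i, j) \<in> connected_rel El Eq"
    using assms(2-4) unfolding connected_rel_def by blast
  then show ?thesis using mem_component_iff[OF assms(1,5)] by simp
qed

lemma connected_rel_imp_eq:
  assumes "(i, j) \<in> connected_rel El Eq"
    and "\<And>e i j. e \<in> El \<union> Eq \<Longrightarrow> i \<in> e \<Longrightarrow> j \<in> e \<Longrightarrow> y i = y j"
  shows "y i = y j"
  using assms(1) unfolding connected_rel_def
  by (induction rule: rtrancl_induct) (auto intro: assms(2))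

lemma NOI_graph_imp_COI_graph:
  assumes "NOI_graph El Eq"
  shows "COI_graph El Eq"
proof -
  obtain P where P: "bipartition Eq P"
    and no_shared: "\<not> (\<exists>v eq el. eq \<in> Eq \<and> el \<in> El \<and> v \<in> eq \<and> v \<in> el)"
    using assms unfolding NOI_graph_def bipartite_def by blast
  have "bipartition Eq (P \<union> \<Union>El)"
    unfolding bipartition_def
  proof
    fix e assume e: "e \<in> Eq"
    then obtain x y where "e = {x, y}" "x \<in> P" "y \<notin> P"
      using P unfolding bipartition_def by blast
    moreover have "y \<notin> \<Union>El" using no_shared e \<open>e = {x, y}\<close> by blast
    ultimately show "\<exists>x y. e = {x, y} \<and> x \<in> P \<union> \<Union>El \<and> y \<notin> P \<union> \<Union>El" by blast
  qed
  then show ?thesis unfolding COI_graph_def by blast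
qed

definition part_sign :: "'n set \<Rightarrow> 'n \<Rightarrow> real" where
  "part_sign P i = (if i \<in> P then 1 else -1)"

lemma part_sign_mult_self [simp]: "part_sign P i * part_sign P i = 1"
  by (simp add: part_sign_def)

lemma part_sign_nonzero [simp]: "part_sign P i \<noteq> 0"
  by (simp add: part_sign_def)

locale COI_partition =
  fixes El Eq :: "('n::finite) set set" and P :: "'n set"
  assumes hybrid: "hybrid_graph El Eq"
    and Q_edges_cross: "bipartition Eq P"
    and L_edges_inside: "\<forall>e\<in>El. e \<subseteq> P \<or> e \<subseteq> - P"
begin

abbreviation \<sigma> :: "'n \<Rightarrow> real" where
  "\<sigma> \<equiv> part_sign P"

lemma part_sign_L_edge: "{i, j} \<in> El \<Longrightarrow> \<sigma> j = \<sigma> i"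
  using L_edges_inside by (auto simp: part_sign_def)

lemma part_sign_Q_edge: "{i, j} \<in> Eq \<Longrightarrow> \<sigma> j = - \<sigma> i"
  using Q_edges_cross by (fastforce simp: bipartition_def part_sign_def doubleton_eq_iff)

lemma L_edge_not_Q_edge:
  assumes "{i, j} \<in> El"
  shows "{i, j} \<notin> Eq"
proof
  assume "{i, j} \<in> Eq"
  then have "\<sigma> i = - \<sigma> i"
    using assms part_sign_L_edge part_sign_Q_edge by metis
  then show False using part_sign_nonzero[of P i] by linarith
qed

lemma hybrid_laplacian_switching:
  "(hybrid_laplacian El Eq *v x) $ i =
    \<sigma> i * (\<Sum>j\<in>UNIV. if {i, j} \<in> El \<union> Eq then \<sigma> i * x$i - \<sigma> j * x$j else 0)"
proof -
  have "(if {i, j} \<in> El then x$i - x$j else 0) + (if {i, j} \<in> Eq then x$i + x$j else 0)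
      = \<sigma> i * (if {i, j} \<in> El \<union> Eq then \<sigma> i * x$i - \<sigma> j * x$j else 0)" for j
  proof (cases "{i, j} \<in> El")
    case True
    then show ?thesis
      by (simp add: L_edge_not_Q_edge part_sign_L_edge algebra_simps flip: mult.assoc)
  next
    case False
    then show ?thesis
      by (simp add: part_sign_Q_edge algebra_simps flip: mult.assoc)
  qed
  then show ?thesis
    by (simp add: hybrid_laplacian_mult_vec_nth[OF hybrid] sum_distrib_left)
qed

lemma signed_indicator_in_null_space:
  assumes "C \<in> components El Eq"
  shows "signed_indicator \<sigma> C \<in> null_space (hybrid_laplacian El Eq)"
proof -
  have "(if {i, j} \<in> El \<union> Eq then \<sigma> i * signed_indicator \<sigma> C $ i - \<sigma> j * signed_indicator \<sigma> C $ j
      else 0) = 0" for i j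
  proof (cases "{i, j} \<in> El \<union> Eq")
    case True
    then have "i \<in> C \<longleftrightarrow> j \<in> C"
      using edge_within_component[OF assms True, of i j] edge_within_component[OF assms True, of j i]
      by auto
    then show ?thesis by (simp add: signed_indicator_def)
  qed simp
  then show ?thesis
    by (simp add: null_space_def vec_eq_iff hybrid_laplacian_switching)
qed

lemma null_space_subset_span:
  "null_space (hybrid_laplacian El Eq) \<subseteq> span (signed_indicator \<sigma> ` components El Eq)"
proof
  fix x assume x: "x \<in> null_space (hybrid_laplacian El Eq)"
  define y where "y j = \<sigma> j * x$j" for j
  have adjacent_const: "y i = y j" if "{i, j} \<in> El \<union> Eq" for i j
  proof (rule laplacian_kernel_const_on_edges[where A = "\<lambda>i j. {i, j} \<in> El \<union> Eq"])
    show "{i, j} \<in> El \<union> Eq \<longleftrightarrow> {j, i} \<in> El \<union> Eq" for i j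
      by (simp add: insert_commute)
    show "(\<Sum>j\<in>UNIV. if {i, j} \<in> El \<union> Eq then y i - y j else 0) = 0" for i
      using x hybrid_laplacian_switching[of x i] unfolding y_def
      by (simp add: null_space_def vec_eq_iff)
  qed fact
  have edge_const: "y i = y j" if e: "e \<in> El \<union> Eq" and "i \<in> e" "j \<in> e" for e i j
  proof -
    obtain a b where "e = {a, b}"
      using e hybrid card_2_iff unfolding hybrid_graph_def by metis
    with \<open>i \<in> e\<close> \<open>j \<in> e\<close> e have "i = j \<or> {i, j} \<in> El \<union> Eq"
      by (auto simp: insert_commute)
    then show ?thesis by (auto intro: adjacent_const)
  qed
  have "y i = y j" if "C \<in> components El Eq" "i \<in> C" "j \<in> C" for C i j
  proof -
    have "(i, j) \<in> connected_rel El Eq" using mem_component_iff[OF that(1,2)] that(3) by simp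
    then show ?thesis using edge_const by (rule connected_rel_imp_eq)
  qed
  then have "(\<chi> j. \<sigma> j * y j) \<in> span (signed_indicator \<sigma> ` components El Eq)"
    by (rule in_span_signed_indicator[OF partition_on_components])
  then show "x \<in> span (signed_indicator \<sigma> ` components El Eq)"
    by (simp add: y_def flip: mult.assoc)
qed

lemma span_signed_indicator_components:
  "span (signed_indicator \<sigma> ` components El Eq) = null_space (hybrid_laplacian El Eq)"
proof
  show "span (signed_indicator \<sigma> ` components El Eq) \<subseteq> null_space (hybrid_laplacian El Eq)"
  proof (rule span_minimal)
    show "signed_indicator \<sigma> ` components El Eq \<subseteq> null_space (hybrid_laplacian El Eq)"
      using signed_indicator_in_null_space by blast
    show "subspace (null_space (hybrid_laplacian El Eq))"
      unfolding null_space_def by (rule linear_subspace_kernel[OF matrix_vector_mul_linear])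
  qed
qed (rule null_space_subset_span)

end

theorem lemmaD1:
  fixes El Eq :: "('n::finite) set set"
  assumes "hybrid_graph El Eq"
    and "NOI_graph El Eq \<or> COI_graph El Eq"
  shows "\<exists>v :: 'n set \<Rightarrow> real^'n.
           (\<forall>C \<in> components El Eq.
              (\<forall>i. v C $ i \<in> {-1, 0, 1}) \<and> (\<forall>i. i \<notin> C \<longrightarrow> v C $ i = 0)) \<and>
           inj_on v (components El Eq) \<and>
           independent (v ` components El Eq) \<and>
           span (v ` components El Eq) = null_space (hybrid_laplacian El Eq)"
proof -
  have "COI_graph El Eq"
    using assms(2) NOI_graph_imp_COI_graph by blast
  then obtain P where "bipartition Eq P" "\<forall>e\<in>El. e \<subseteq> P \<or> e \<subseteq> - P"
    unfolding COI_graph_def by blast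
  with assms(1) interpret COI_partition El Eq P
    by unfold_locales
  note blocks = partition_onD2[OF partition_on_components] partition_onD3[OF partition_on_components]
  show ?thesis
  proof (intro exI[of _ "signed_indicator \<sigma>"] conjI ballI allI impI)
    show "signed_indicator \<sigma> C $ i \<in> {-1, 0, 1}" for C i
      by (simp add: signed_indicator_def part_sign_def)
    show "signed_indicator \<sigma> C $ i = 0" if "i \<notin> C" for C i
      using that by (simp add: signed_indicator_def)
    show "inj_on (signed_indicator \<sigma>) (components El Eq)"
      using blocks by (rule inj_on_signed_indicator) simp
    show "independent (signed_indicator \<sigma> ` components El Eq)"
      using blocks by (rule independent_signed_indicator) simp
  qed (rule span_signed_indicator_components)
qed

end
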